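(* Consider the following TDCD process. Let $N\ge 1$ silos each contain $K\ge 1$ clients, let $D=D_1+\dots+D_N$, and write every $\theta\in\mathbb{R}^D$ in blocks $\theta=[\theta_{(1)}^T,\dots,\theta_{(N)}^T]^T$ with $\theta_{(j)}\in\mathbb{R}^{D_j}$. Fix an integer $Q\ge1$ and $\eta>0$. Client $k$ of silo $j$ holds $\theta^t_{k,j}\in\mathbb{R}^{D_j}$. Define $\tilde\theta^t\in\mathbb{R}^D$ by $\tilde\theta^t_{(j)}=\frac1K\sum_k\theta^t_{k,j}$. At every multiple $t$ of $Q$, each $\theta^t_{k,j}$ is reset to $\tilde\theta^t_{(j)}$. For the current iteration $t$, let $t_0$ be the most recent such synchronization iteration before $t$ (with $t-t_0\le Q$). Define $y^t_{k,j}\in\mathbb{R}^D$ by $(y^t_{k,j})_{(j)}=\theta^t_{k,j}$ and $(y^t_{k,j})_{(l)}=\tilde\theta^{t_0}_{(l)}$ for $l\ne j$. The update is $\theta^{t+1}_{k,j}=\theta^t_{k,j}-\eta\, g_{k,j}(y^t_{k,j})$, where $g_{k,j}(\cdot)\in\mathbb{R}^{D_j}$ is the stochastic partial gradient computed by client $k$ of silo $j$ on the current minibatch. Then for any constant $L_{\max}>0$, $$\frac{L_{\max}^2}{K}\sum_{j=1}^N\sum_{k=1}^K\|\tilde\theta^t-y^t_{k,j}\|^2\le\frac{\eta^2L_{\max}^2QN}{K}\sum_{j=1}^N\sum_{\tau=t_0}^{t-1}\sum_{p=1}^K\|g_{p,j}(y^\tau_{p,j})\|^2.$$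
   Context: In the paper, $L_{\max}=\max_j L_j$, where $L_j$ is the Lipschitz constant of the block partial gradient $\nabla_{(j)}\mathcal{L}$ of the loss. The inequality does not depend on that interpretation, since both sides carry the factor $L_{\max}^2$. *)

theory Defs
  imports Complex_Main
begin

text \<open>A vector of R^{D_j} (block j) is a function nat => real, of which
  only the coordinates i < D j are meaningful. A vector of R^D, D = D_1 + ... + D_N,
  is given blockwise as a function nat => nat => real: x j is its block j (j = 1..N).
  Client states: th t k j is theta^t_{k,j} (silo j, client k, iteration t).\<close>

definition bnorm :: "nat \<Rightarrow> (nat \<Rightarrow> real) \<Rightarrow> real" where
  "bnorm d v = sqrt (\<Sum>i<d. (v i)^2)"

definition vnorm :: "(nat \<Rightarrow> nat) \<Rightarrow> nat \<Rightarrow> (nat \<Rightarrow> nat \<Rightarrow> real) \<Rightarrow> real" where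
  "vnorm D N x = sqrt (\<Sum>j=1..N. \<Sum>i<D j. (x j i)^2)"

definition avg :: "nat \<Rightarrow> (nat \<Rightarrow> nat \<Rightarrow> nat \<Rightarrow> real) \<Rightarrow> nat \<Rightarrow> nat \<Rightarrow> real" where
  "avg K th j = (\<lambda>i. (1 / real K) * (\<Sum>k=1..K. th k j i))"

definition sync :: "nat \<Rightarrow> nat \<Rightarrow> nat" where
  "sync Q t = Q * (t div Q)"

definition yv :: "nat \<Rightarrow> nat \<Rightarrow> (nat \<Rightarrow> nat \<Rightarrow> nat \<Rightarrow> nat \<Rightarrow> real) \<Rightarrow> nat \<Rightarrow> nat \<Rightarrow> nat
    \<Rightarrow> nat \<Rightarrow> nat \<Rightarrow> real" where
  "yv Q K th t k j = (\<lambda>l. if l = j then th t k j else avg K (th (sync Q t)) l)"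

end

theory Submission
  imports Defs "HOL-Analysis.Convex"
begin

text \<open>Between two synchronizations every client of silo j starts from block j, say a_j, of
  the averaged parameter at t0 and takes plain local steps, so theta^t_{k,j} = a_j - eta G_{k,j},
  where the drift G_{k,j} is the sum of the at most Q gradients since t0. Hence block j of
  tilde-theta^t - y^t_{k,j} is eta (G_{k,j} - Gbar_j) and every other block l is -eta Gbar_l,
  with Gbar the average drift. Coordinatewise, both the spread of the drifts around their mean
  and K times the squared mean are bounded by the second moment of the drifts, which yields the
  factor N; Cauchy-Schwarz over the at most Q local steps yields the factor Q.\<close>

lemma sum_squares_diff_mean:
  fixes x :: "'a \<Rightarrow> real"
  assumes "finite A"
  defines "m \<equiv> sum x A / real (card A)"
  shows "(\<Sum>k\<in>A. (x k - m)^2) = (\<Sum>k\<in>A. (x k)^2) - real (card A) * m^2"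
proof -
  have "real (card A) * m = sum x A"
    using assms by (cases "A = {}") (simp_all add: m_def)
  then show ?thesis
    by (simp add: power2_diff sum.distrib sum_subtractf sum_distrib_left[symmetric]
        sum_distrib_right[symmetric] power2_eq_square algebra_simps)
qed

lemma card_mult_square_mean_le:
  fixes x :: "'a \<Rightarrow> real"
  shows "real (card A) * (sum x A / real (card A))^2 \<le> (\<Sum>k\<in>A. (x k)^2)"
  using sum_squared_le_sum_of_squares[of x A]
  by (cases "card A = 0") (simp_all add: sum_nonneg power_divide field_simps power2_eq_square)

lemma sum_sq_block_deviation_le:
  fixes x :: "nat \<Rightarrow> real" and K N :: nat
  assumes "l \<in> {1..N}"
  defines "m \<equiv> (1 / real K) * (\<Sum>k=1..K. x k)"
  shows "(\<Sum>j=1..N. \<Sum>k=1..K. (if l = j then x k - m else - m)^2) \<le> N * (\<Sum>k=1..K. (x k)^2)"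
proof -
  let ?S = "\<Sum>k=1..K. (x k)^2"
  have mean: "K * m^2 \<le> ?S"
    using card_mult_square_mean_le[where A="{1..K}" and x=x] by (simp add: m_def)
  have "(\<Sum>j=1..N. \<Sum>k=1..K. (if l = j then x k - m else - m)^2)
      = (N - 1) * (K * m^2) + (\<Sum>k=1..K. (x k - m)^2)"
    using assms(1) by (subst sum.remove[of _ l]) (auto simp: of_nat_diff)
  also have "\<dots> = (N - 1) * (K * m^2) + ?S - K * m^2"
    using sum_squares_diff_mean[where A="{1..K}" and x=x] by (simp add: m_def)
  also have "\<dots> \<le> (N - 1) * ?S + ?S"
  proof -
    have "(N - 1) * (K * m^2) \<le> (N - 1) * ?S"
      using mean by (intro mult_left_mono) auto
    moreover have "0 \<le> K * m^2" by simp
    ultimately show ?thesis by linarith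
  qed
  also have "\<dots> = N * ?S"
    using assms(1) by (simp add: of_nat_diff algebra_simps)
  finally show ?thesis .
qed

lemma sum_nested_swap:
  "(\<Sum>a\<in>A. \<Sum>b\<in>B. \<Sum>c\<in>C. f a b c) = (\<Sum>c\<in>C. \<Sum>a\<in>A. \<Sum>b\<in>B. f a b c)"
proof -
  have "(\<Sum>a\<in>A. \<Sum>b\<in>B. \<Sum>c\<in>C. f a b c) = (\<Sum>a\<in>A. \<Sum>c\<in>C. \<Sum>b\<in>B. f a b c)"
    by (rule sum.cong[OF refl], rule sum.swap)
  also have "\<dots> = (\<Sum>c\<in>C. \<Sum>a\<in>A. \<Sum>b\<in>B. f a b c)"
    by (rule sum.swap)
  finally show ?thesis .
qed

lemma vnorm_sq: "(vnorm D N x)^2 = (\<Sum>l=1..N. \<Sum>i<D l. (x l i)^2)"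
  by (simp add: vnorm_def sum_nonneg)

lemma bnorm_sq: "(bnorm d v)^2 = (\<Sum>i<d. (v i)^2)"
  by (simp add: bnorm_def sum_nonneg)

lemma avg_eq_const:
  assumes "K \<ge> 1" and "\<And>k. k \<in> {1..K} \<Longrightarrow> x k j = v"
  shows "avg K x j = v"
  using assms by (simp add: avg_def)

lemma avg_diff_scale:
  assumes "K \<ge> 1"
  shows "avg K (\<lambda>k l i. a l i - c * x k l i) j i = a j i - c * avg K x j i"
  using assms by (simp add: avg_def sum_subtractf sum_distrib_left[symmetric] field_simps)

lemma sync_le: "sync Q t \<le> t"
  by (simp add: sync_def)

lemma less_sync_add: "Q \<ge> 1 \<Longrightarrow> t < sync Q t + Q"
proof -
  have "t = Q * (t div Q) + t mod Q" by simp
  moreover assume "Q \<ge> 1"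
  then have "t mod Q < Q" by simp
  ultimately show ?thesis unfolding sync_def by linarith
qed

lemma dvd_sync: "Q dvd sync Q t"
  by (simp add: sync_def)

locale tdcd =
  fixes N K Q :: nat and \<eta> :: real
    and th :: "nat \<Rightarrow> nat \<Rightarrow> nat \<Rightarrow> nat \<Rightarrow> real"
    and g :: "nat \<Rightarrow> nat \<Rightarrow> nat \<Rightarrow> (nat \<Rightarrow> nat \<Rightarrow> real) \<Rightarrow> nat \<Rightarrow> real"
  assumes K_pos: "K \<ge> 1" and Q_pos: "Q \<ge> 1"
    and init: "\<forall>k\<in>{1..K}. \<forall>j\<in>{1..N}. th 0 k j = avg K (th 0) j"
    and update: "\<forall>\<tau> k j. k \<in> {1..K} \<longrightarrow> j \<in> {1..N} \<longrightarrow>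
       th (Suc \<tau>) k j =
         (if Q dvd Suc \<tau>
          then avg K (\<lambda>p l i. th \<tau> p l i - \<eta> * g \<tau> p l (yv Q K th \<tau> p l) i) j
          else (\<lambda>i. th \<tau> k j i - \<eta> * g \<tau> k j (yv Q K th \<tau> k j) i))"
begin

abbreviation grad :: "nat \<Rightarrow> nat \<Rightarrow> nat \<Rightarrow> nat \<Rightarrow> real" where
  "grad \<tau> k j \<equiv> g \<tau> k j (yv Q K th \<tau> k j)"

definition drift :: "nat \<Rightarrow> nat \<Rightarrow> nat \<Rightarrow> nat \<Rightarrow> real" where
  "drift t k j i = (\<Sum>\<tau>\<in>{sync Q t..<t}. grad \<tau> k j i)"

lemma th_synced:
  assumes "Q dvd t0" and "k \<in> {1..K}" and "j \<in> {1..N}"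
  shows "th t0 k j = avg K (th t0) j"
proof (cases t0)
  case 0
  then show ?thesis using init assms(2,3) by simp
next
  case (Suc s)
  then have synced: "th t0 k' j = avg K (\<lambda>p l i. th s p l i - \<eta> * grad s p l i) j"
    if "k' \<in> {1..K}" for k'
    using update that assms(1,3) by simp
  have "avg K (th t0) j = avg K (\<lambda>p l i. th s p l i - \<eta> * grad s p l i) j"
    using K_pos synced by (rule avg_eq_const)
  then show ?thesis using synced[OF assms(2)] by simp
qed

lemma th_local_steps:
  assumes "Q dvd t0" and "t0 \<le> t" and "t < t0 + Q" and "k \<in> {1..K}" and "j \<in> {1..N}"
  shows "th t k j = (\<lambda>i. avg K (th t0) j i - \<eta> * (\<Sum>\<tau>\<in>{t0..<t}. grad \<tau> k j i))"
  using assms(2,3)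
proof (induction t rule: dec_induct)
  case base
  then show ?case using th_synced assms(1,4,5) by simp
next
  case (step n)
  have "\<not> Q dvd Suc n"
  proof
    assume "Q dvd Suc n"
    then have "Q dvd Suc n - t0" using assms(1) by (simp add: dvd_diff_nat)
    moreover have "0 < Suc n - t0" "Suc n - t0 < Q" using step.hyps step.prems by simp_all
    ultimately show False by (simp add: nat_dvd_not_less)
  qed
  moreover have "n < t0 + Q" using step.prems by simp
  ultimately show ?case using update step.IH step.hyps assms(4,5) by (auto simp: algebra_simps)
qed

lemma th_eq_drift:
  assumes "k \<in> {1..K}" and "j \<in> {1..N}"
  shows "th t k j i = avg K (th (sync Q t)) j i - \<eta> * drift t k j i"
  using th_local_steps[OF dvd_sync sync_le less_sync_add[OF Q_pos] assms]
  by (simp add: drift_def)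

lemma avg_th_eq_drift:
  assumes "j \<in> {1..N}"
  shows "avg K (th t) j i = avg K (th (sync Q t)) j i - \<eta> * avg K (drift t) j i"
proof -
  have "avg K (th t) j i = avg K (\<lambda>k l i. avg K (th (sync Q t)) l i - \<eta> * drift t k l i) j i"
    using th_eq_drift[where t=t] assms by (simp add: avg_def)
  then show ?thesis using avg_diff_scale[OF K_pos] by simp
qed

lemma avg_minus_yv:
  assumes "k \<in> {1..K}" and "j \<in> {1..N}" and "l \<in> {1..N}"
  shows "avg K (th t) l i - yv Q K th t k j l i
       = \<eta> * (if l = j then drift t k l i - avg K (drift t) l i else - avg K (drift t) l i)"
  using assms avg_th_eq_drift[where t=t] th_eq_drift[where t=t]
  by (auto simp: yv_def algebra_simps)

lemma drift_sq_le: "(drift t k j i)^2 \<le> Q * (\<Sum>\<tau>\<in>{sync Q t..<t}. (grad \<tau> k j i)^2)"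
proof -
  let ?S = "\<Sum>\<tau>\<in>{sync Q t..<t}. (grad \<tau> k j i)^2"
  have "(drift t k j i)^2 \<le> ?S * card {sync Q t..<t}"
    unfolding drift_def by (rule sum_squared_le_sum_of_squares)
  also have "\<dots> \<le> ?S * Q"
    using less_sync_add[OF Q_pos, of t] by (intro mult_left_mono sum_nonneg) auto
  finally show ?thesis by (simp add: mult.commute)
qed

lemma sum_sq_avg_minus_yv_coord_le:
  assumes "l \<in> {1..N}"
  shows "(\<Sum>j=1..N. \<Sum>k=1..K. (avg K (th t) l i - yv Q K th t k j l i)^2)
    \<le> \<eta>^2 * Q * N * (\<Sum>\<tau>\<in>{sync Q t..<t}. \<Sum>p=1..K. (grad \<tau> p l i)^2)"
proof -
  have "(\<Sum>j=1..N. \<Sum>k=1..K. (avg K (th t) l i - yv Q K th t k j l i)^2)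
      = \<eta>^2 * (\<Sum>j=1..N. \<Sum>k=1..K.
          (if l = j then drift t k l i - avg K (drift t) l i else - avg K (drift t) l i)^2)"
    using avg_minus_yv assms by (simp add: power_mult_distrib sum_distrib_left)
  also have "\<dots> \<le> \<eta>^2 * (N * (\<Sum>k=1..K. (drift t k l i)^2))"
    using sum_sq_block_deviation_le[OF assms, of "\<lambda>k. drift t k l i" K]
    unfolding avg_def by (intro mult_left_mono) simp_all
  also have "\<dots> \<le> \<eta>^2 * (N * (\<Sum>k=1..K. Q * (\<Sum>\<tau>\<in>{sync Q t..<t}. (grad \<tau> k l i)^2)))"
    by (intro mult_left_mono sum_mono drift_sq_le) simp_all
  also have "\<dots> = \<eta>^2 * Q * N * (\<Sum>\<tau>\<in>{sync Q t..<t}. \<Sum>p=1..K. (grad \<tau> p l i)^2)"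
    unfolding sum.swap[of _ "{1..K}"] by (simp add: sum_distrib_left mult_ac)
  finally show ?thesis .
qed

lemma sum_sq_avg_minus_yv_le:
  "(\<Sum>j=1..N. \<Sum>k=1..K. (vnorm D N (\<lambda>l i. avg K (th t) l i - yv Q K th t k j l i))^2)
    \<le> \<eta>^2 * Q * N * (\<Sum>j=1..N. \<Sum>\<tau>\<in>{sync Q t..<t}. \<Sum>p=1..K. (bnorm (D j) (grad \<tau> p j))^2)"
proof -
  let ?d = "\<lambda>j k l i. (avg K (th t) l i - yv Q K th t k j l i)^2"
  have "(\<Sum>j=1..N. \<Sum>k=1..K. (vnorm D N (\<lambda>l i. avg K (th t) l i - yv Q K th t k j l i))^2)
      = (\<Sum>j=1..N. \<Sum>k=1..K. \<Sum>l=1..N. \<Sum>i<D l. ?d j k l i)"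
    by (simp add: vnorm_sq)
  also have "\<dots> = (\<Sum>l=1..N. \<Sum>j=1..N. \<Sum>k=1..K. \<Sum>i<D l. ?d j k l i)"
    by (rule sum_nested_swap)
  also have "\<dots> = (\<Sum>l=1..N. \<Sum>i<D l. \<Sum>j=1..N. \<Sum>k=1..K. ?d j k l i)"
    by (rule sum.cong[OF refl], rule sum_nested_swap)
  also have "\<dots> \<le> (\<Sum>l=1..N. \<Sum>i<D l.
      \<eta>^2 * Q * N * (\<Sum>\<tau>\<in>{sync Q t..<t}. \<Sum>p=1..K. (grad \<tau> p l i)^2))"
    by (intro sum_mono sum_sq_avg_minus_yv_coord_le) simp
  also have "\<dots> = \<eta>^2 * Q * N * (\<Sum>l=1..N. \<Sum>\<tau>\<in>{sync Q t..<t}. \<Sum>p=1..K. \<Sum>i<D l. (grad \<tau> p l i)^2)"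
    by (simp add: sum_distrib_left sum_nested_swap[where C="{..<D _}"])
  finally show ?thesis by (simp add: bnorm_sq)
qed

end

theorem lemma6:
  fixes N K Q t :: nat and D :: "nat \<Rightarrow> nat" and \<eta> Lmax :: real
    and th :: "nat \<Rightarrow> nat \<Rightarrow> nat \<Rightarrow> nat \<Rightarrow> real"
    and g :: "nat \<Rightarrow> nat \<Rightarrow> nat \<Rightarrow> (nat \<Rightarrow> nat \<Rightarrow> real) \<Rightarrow> nat \<Rightarrow> real"
  assumes "N \<ge> 1" and "K \<ge> 1" and "Q \<ge> 1" and "\<eta> > 0" and "Lmax > 0"
    and init: "\<forall>k\<in>{1..K}. \<forall>j\<in>{1..N}. th 0 k j = avg K (th 0) j"
    and step: "\<forall>\<tau> k j. k \<in> {1..K} \<longrightarrow> j \<in> {1..N} \<longrightarrow>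
       th (Suc \<tau>) k j =
         (if Q dvd Suc \<tau>
          then avg K (\<lambda>p l i. th \<tau> p l i - \<eta> * g \<tau> p l (yv Q K th \<tau> p l) i) j
          else (\<lambda>i. th \<tau> k j i - \<eta> * g \<tau> k j (yv Q K th \<tau> k j) i))"
  shows "Lmax^2 / real K *
           (\<Sum>j=1..N. \<Sum>k=1..K.
              (vnorm D N (\<lambda>l i. avg K (th t) l i - yv Q K th t k j l i))^2)
         \<le> \<eta>^2 * Lmax^2 * real Q * real N / real K *
           (\<Sum>j=1..N. \<Sum>\<tau>\<in>{sync Q t..<t}. \<Sum>p=1..K.
              (bnorm (D j) (g \<tau> p j (yv Q K th \<tau> p j)))^2)"
proof -
  interpret tdcd N K Q \<eta> th g
    using \<open>K \<ge> 1\<close> \<open>Q \<ge> 1\<close> init step by unfold_locales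
  have "0 \<le> Lmax^2 / real K" by simp
  from mult_left_mono[OF sum_sq_avg_minus_yv_le this]
  show ?thesis by (simp add: mult_ac)
qed

end
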